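(* Let $\mathbb{K}\in\{\mathbb{R},\mathbb{C},\mathbb{H}\}$, $d(\mathbb{K})=1,2,4$ respectively, and $S(\mathbb{K})$ the group of elements of norm $1$ in $\mathbb{K}$ (so $\mathbb{Z}_2$, $U(1)$, $\mathrm{Sp}(1)$). For $k\geqslant 2$ let $S(\mathbb{K})^{k-1}$ act linearly on $\mathbb{K}^k$ by \[ (g_1,\ldots,g_{k-1})\cdot(q_1,\ldots,q_k)=(q_1g_1^{-1},\,g_1q_2g_2^{-1},\,\ldots,\,g_{k-2}q_{k-1}g_{k-1}^{-1},\,g_{k-1}q_k). \] Then the orbit space $\mathbb{K}^k/S(\mathbb{K})^{k-1}$ is homeomorphic to $\mathbb{R}^{d(\mathbb{K})+k-1}$. *)

theory Defs
  imports "HOL-Analysis.Analysis"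
begin

definition Kspace :: "nat \<Rightarrow> (nat \<Rightarrow> 'a::{topological_space,zero}) topology"
  where "Kspace k = subtopology (product_topology (\<lambda>i. euclidean) UNIV) {x. \<forall>i\<ge>k. x i = 0}"

section \<open>Quaternions H, realised as R^4 = real \<times> real \<times> real \<times> real
  with the Hamilton product (a + b i + c j + d k)\<close>

type_synonym quat = "real \<times> real \<times> real \<times> real"

definition qmult :: "quat \<Rightarrow> quat \<Rightarrow> quat" where
  "qmult p q = (case p of (a1, b1, c1, d1) \<Rightarrow> case q of (a2, b2, c2, d2) \<Rightarrow>
     (a1*a2 - b1*b2 - c1*c2 - d1*d2,
      a1*b2 + b1*a2 + c1*d2 - d1*c2,
      a1*c2 - b1*d2 + c1*a2 + d1*b2,
      a1*d2 + b1*c2 - c1*b2 + d1*a2))"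

definition qinv :: "quat \<Rightarrow> quat" where
  "qinv q = (case q of (a, b, c, d) \<Rightarrow>
     let n = a^2 + b^2 + c^2 + d^2 in (a / n, - b / n, - c / n, - d / n))"

text \<open>With 0-based indices, g 0, ..., g (k-2) are g_1, ..., g_(k-1), and
  (g . q) i = g_(i) q_i g_(i+1)^(-1) in 1-based notation, with the missing
  factors at both ends omitted.\<close>

definition chain_action ::
  "('a \<Rightarrow> 'a \<Rightarrow> 'a) \<Rightarrow> ('a \<Rightarrow> 'a) \<Rightarrow> nat \<Rightarrow> (nat \<Rightarrow> 'a) \<Rightarrow> (nat \<Rightarrow> 'a) \<Rightarrow> (nat \<Rightarrow> 'a)"
  where "chain_action mul ginv k g q = (\<lambda>i.
     if i < k then
       (let l = (if i = 0 then q i else mul (g (i - 1)) (q i))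
        in if i = k - 1 then l else mul l (ginv (g i)))
     else q i)"

definition orbit_rel ::
  "('a \<Rightarrow> 'a \<Rightarrow> 'a) \<Rightarrow> ('a \<Rightarrow> 'a) \<Rightarrow> 'a set \<Rightarrow> nat \<Rightarrow> (nat \<Rightarrow> 'a::{topological_space,zero}) rel"
  where "orbit_rel mul ginv S k =
     {(p, q). p \<in> topspace (Kspace k) \<and>
        (\<exists>g. (\<forall>i < k - 1. g i \<in> S) \<and> q = chain_action mul ginv k g p)}"

definition quotient_topology :: "'a topology \<Rightarrow> 'a rel \<Rightarrow> 'a set topology"
  where "quotient_topology X R =
     topology (\<lambda>U. U \<subseteq> topspace X // R \<and> openin X (\<Union>U))"

definition orbit_space ::
  "('a \<Rightarrow> 'a \<Rightarrow> 'a) \<Rightarrow> ('a \<Rightarrow> 'a) \<Rightarrow> 'a set \<Rightarrow> nat \<Rightarrow> (nat \<Rightarrow> 'a::{topological_space,zero}) set topology"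
  where "orbit_space mul ginv S k = quotient_topology (Kspace k) (orbit_rel mul ginv S k)"

end

(*
  Write K for the algebra and d for its real dimension; the argument only uses that K is an
  associative real algebra with unit whose norm is multiplicative. The gauges telescope in the
  ordered product q_1 q_2 ... q_k, so the norms |q_i| and this product are invariant, and they
  are all the invariants: a gauge with g_(i+1) the phase of g_i q_i makes q_1, ..., q_(k-1)
  real and nonnegative, after which the last entry is fixed by the product, unless some q_j
  vanishes, and then the gauge can also rotate the last entry freely.
  Hence the orbits are the fibres of
    F q = (|q_1| - |q_k|, ..., |q_(k-1)| - |q_k|, q_1 q_2 ... q_k)  in  R^(k-1) x K.
  Given the differences s_j, the norm of the product is t * prod_j (t + s_j) with t = |q_k|,
  which is strictly increasing in t and tends to infinity on the admissible range of t; so F is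
  onto R^(d+k-1), and bounded values of F bound all |q_i|, so preimages of compact sets are
  compact. A continuous surjection with this property onto a metrizable space is a quotient
  map, so the orbit space is homeomorphic to R^(d+k-1).
*)

theory Submission
  imports Defs
begin

section \<open>Quotient topologies\<close>

lemma openin_quotient_topology:
  assumes "equiv (topspace X) R"
  shows "openin (quotient_topology X R) U \<longleftrightarrow> U \<subseteq> topspace X // R \<and> openin X (\<Union>U)"
proof -
  have "istopology (\<lambda>U. U \<subseteq> topspace X // R \<and> openin X (\<Union>U))"
    unfolding istopology_def
  proof (rule conjI; intro allI impI)
    fix S T
    assume S: "S \<subseteq> topspace X // R \<and> openin X (\<Union>S)"
      and T: "T \<subseteq> topspace X // R \<and> openin X (\<Union>T)"
    have "\<Union>(S \<inter> T) = \<Union>S \<inter> \<Union>T"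
      using quotient_disj[OF assms] S T by blast
    then show "S \<inter> T \<subseteq> topspace X // R \<and> openin X (\<Union>(S \<inter> T))"
      using S T by auto
  next
    fix K
    assume K: "\<forall>U\<in>K. U \<subseteq> topspace X // R \<and> openin X (\<Union>U)"
    have "openin X (\<Union>(Union ` K))"
      by (rule openin_Union) (use K in blast)
    moreover have "\<Union>(\<Union>K) = \<Union>(Union ` K)"
      by blast
    ultimately show "\<Union>K \<subseteq> topspace X // R \<and> openin X (\<Union>(\<Union>K))"
      using K by auto
  qed
  then show ?thesis
    by (simp add: quotient_topology_def)
qed

lemma topspace_quotient_topology:
  assumes "equiv (topspace X) R"
  shows "topspace (quotient_topology X R) = topspace X // R"
proof (rule subset_antisym)
  show "topspace (quotient_topology X R) \<subseteq> topspace X // R"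
    using openin_topspace[of "quotient_topology X R"]
    unfolding openin_quotient_topology[OF assms] by (rule conjunct1)
  have "openin (quotient_topology X R) (topspace X // R)"
    by (simp add: openin_quotient_topology[OF assms] Union_quotient[OF assms])
  then show "topspace X // R \<subseteq> topspace (quotient_topology X R)"
    by (rule openin_subset)
qed

lemma quotient_map_quotient_topology:
  assumes R: "equiv (topspace X) R"
  shows "quotient_map X (quotient_topology X R) (\<lambda>x. R `` {x})"
  unfolding quotient_map_def topspace_quotient_topology[OF R]
proof (intro conjI allI impI)
  show "(\<lambda>x. R `` {x}) ` topspace X = topspace X // R"
    by (auto simp: quotient_def)
  fix U
  assume U: "U \<subseteq> topspace X // R"
  have "{x \<in> topspace X. R `` {x} \<in> U} = \<Union>U"
  proof
    show "{x \<in> topspace X. R `` {x} \<in> U} \<subseteq> \<Union>U"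
      using equiv_class_self[OF R] by blast
    show "\<Union>U \<subseteq> {x \<in> topspace X. R `` {x} \<in> U}"
    proof
      fix x
      assume "x \<in> \<Union>U"
      then obtain C where "C \<in> U" "x \<in> C"
        by blast
      moreover obtain z where "z \<in> topspace X" "C = R `` {z}"
        using U \<open>C \<in> U\<close> by (auto elim: quotientE)
      ultimately show "x \<in> {x \<in> topspace X. R `` {x} \<in> U}"
        using R by (auto simp: equiv_class_eq_iff)
    qed
  qed
  then show "openin X {x \<in> topspace X. R `` {x} \<in> U} = openin (quotient_topology X R) U"
    using U by (simp add: openin_quotient_topology[OF R])
qed

lemma homeomorphic_space_quotient_topology:
  assumes f: "quotient_map X Y f"
  shows "quotient_topology X {(x, y). x \<in> topspace X \<and> y \<in> topspace X \<and> f x = f y}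
           homeomorphic_space Y"
proof -
  define R where "R = {(x, y). x \<in> topspace X \<and> y \<in> topspace X \<and> f x = f y}"
  define Q where "Q = quotient_topology X R"
  have R: "equiv (topspace X) R"
    unfolding R_def equiv_def refl_on_def sym_def trans_def by auto
  have \<pi>: "quotient_map X Q (\<lambda>x. R `` {x})"
    unfolding Q_def by (rule quotient_map_quotient_topology[OF R])
  have same_fibres: "R `` {x} = R `` {y} \<longleftrightarrow> f x = f y"
    if "x \<in> topspace X" "y \<in> topspace X" for x y
  proof -
    have "R `` {x} = R `` {y} \<longleftrightarrow> (x, y) \<in> R"
      by (rule eq_equiv_class_iff[OF R that])
    also have "\<dots> \<longleftrightarrow> f x = f y"
      using that by (simp add: R_def)
    finally show ?thesis .
  qed
  obtain g where g: "continuous_map Q Y g" "\<And>x. x \<in> topspace X \<Longrightarrow> g (R `` {x}) = f x"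
  proof (rule quotient_map_lift_exists[OF \<pi> quotient_imp_continuous_map[OF f]])
    show "f x = f y" if "x \<in> topspace X" "y \<in> topspace X" "R `` {x} = R `` {y}" for x y
      using same_fibres[OF that(1,2)] that(3) by simp
  qed auto
  have "quotient_map X Y (g \<circ> (\<lambda>x. R `` {x}))"
    by (rule quotient_map_eq[OF f]) (simp add: g(2))
  then have "quotient_map Q Y g"
    by (rule iffD1[OF quotient_map_compose_eq[OF \<pi>]])
  moreover have "inj_on g (topspace Q)"
  proof (rule inj_onI)
    fix C D
    assume C: "C \<in> topspace Q" and D: "D \<in> topspace Q" and "g C = g D"
    obtain x where x: "x \<in> topspace X" "C = R `` {x}"
      using C quotient_imp_surjective_map[OF \<pi>] by blast
    obtain y where y: "y \<in> topspace X" "D = R `` {y}"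
      using D quotient_imp_surjective_map[OF \<pi>] by blast
    have "f x = f y"
      using \<open>g C = g D\<close> x y by (simp add: g(2))
    then show "C = D"
      using x y by (simp add: same_fibres)
  qed
  ultimately have "homeomorphic_map Q Y g"
    by (simp add: homeomorphic_map_def)
  then show ?thesis
    unfolding Q_def R_def by (rule homeomorphic_map_imp_homeomorphic_space)
qed

section \<open>Products of shifted reals\<close>

lemma shifted_prod_strict_mono:
  fixes s :: "nat \<Rightarrow> real"
  assumes "0 \<le> a" "\<forall>j<m. 0 \<le> a + s j" "a < b"
  shows "a * (\<Prod>j<m. a + s j) < b * (\<Prod>j<m. b + s j)"
proof -
  have "(\<Prod>j<m. a + s j) \<le> (\<Prod>j<m. b + s j)"
    using assms by (intro prod_mono) auto
  then have "a * (\<Prod>j<m. a + s j) \<le> a * (\<Prod>j<m. b + s j)"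
    using assms(1) by (rule mult_left_mono)
  also have "\<dots> < b * (\<Prod>j<m. b + s j)"
    using assms by (intro mult_strict_right_mono prod_pos) auto
  finally show ?thesis .
qed

lemma shifted_prod_inj:
  fixes s :: "nat \<Rightarrow> real"
  assumes "0 \<le> a" "\<forall>j<m. 0 \<le> a + s j" "0 \<le> b" "\<forall>j<m. 0 \<le> b + s j"
    and "a * (\<Prod>j<m. a + s j) = b * (\<Prod>j<m. b + s j)"
  shows "a = b"
  using shifted_prod_strict_mono[of a m s b] shifted_prod_strict_mono[of b m s a] assms
  by (cases a b rule: linorder_cases) auto

lemma shifted_prod_surj:
  fixes s :: "nat \<Rightarrow> real"
  assumes "0 \<le> t"
  obtains a where "0 \<le> a" "\<forall>j<m. 0 \<le> a + s j" "a * (\<Prod>j<m. a + s j) = t"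
proof -
  define f where "f a = a * (\<Prod>j<m. a + s j)" for a
  define a0 where "a0 = Max (insert 0 ((\<lambda>j. - s j) ` {..<m}))"
  have a0: "0 \<le> a0" "\<And>j. j < m \<Longrightarrow> - s j \<le> a0"
    by (auto simp: a0_def)
  \<comment> \<open>a0 is 0 or a root of some factor a + s j\<close>
  have "f a0 = 0"
  proof -
    have "a0 \<in> insert 0 ((\<lambda>j. - s j) ` {..<m})"
      unfolding a0_def by (rule Max_in) auto
    then show ?thesis
      by (auto simp: f_def)
  qed
  moreover have "t \<le> f (a0 + t + 1)"
  proof -
    have "1 \<le> (\<Prod>j<m. a0 + t + 1 + s j)"
      using a0 assms by (intro prod_ge_1) force
    then have "a0 + t + 1 \<le> f (a0 + t + 1)"
      using a0 assms unfolding f_def by (simp add: mult_le_cancel_left1)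
    then show ?thesis
      using a0 by linarith
  qed
  moreover have "continuous_on {a0..a0 + t + 1} f"
    unfolding f_def by (intro continuous_intros)
  ultimately obtain a where a: "a0 \<le> a" "f a = t"
    using IVT'[of f a0 t "a0 + t + 1"] assms a0 by auto
  show ?thesis
  proof (rule that)
    show "0 \<le> a" "\<forall>j<m. 0 \<le> a + s j"
      using a a0 by force+
    show "a * (\<Prod>j<m. a + s j) = t"
      using a by (simp add: f_def)
  qed
qed

lemma shifted_prod_bound:
  fixes s :: "nat \<Rightarrow> real"
  assumes "0 \<le> M" "\<forall>j<m. \<bar>s j\<bar> \<le> M" "a * (\<Prod>j<m. a + s j) \<le> M"
  shows "a \<le> M + 1"
proof (rule ccontr)
  assume "\<not> a \<le> M + 1"
  then have "1 \<le> (\<Prod>j<m. a + s j)"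
    using assms(2) by (intro prod_ge_1) force
  then have "a \<le> a * (\<Prod>j<m. a + s j)"
    using \<open>\<not> a \<le> M + 1\<close> assms(1) by (simp add: mult_le_cancel_left1)
  then show False
    using \<open>\<not> a \<le> M + 1\<close> assms(3) by linarith
qed

lemma prod_lessThan_eq_shifted_prod:
  fixes r :: "nat \<Rightarrow> real"
  assumes "0 < n"
  shows "(\<Prod>i<n. r i) = r (n - 1) * (\<Prod>j<n - 1. r (n - 1) + (r j - r (n - 1)))"
proof -
  have "(\<Prod>i<n. r i) = (\<Prod>i<Suc (n - 1). r i)"
    using assms by simp
  also have "\<dots> = r (n - 1) * (\<Prod>j<n - 1. r j)"
    by (simp add: prod.lessThan_Suc mult.commute)
  finally show ?thesis
    by simp
qed

section \<open>Coordinates on Euclidean spaces\<close>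

definition basis_enum :: "nat \<Rightarrow> 'a::euclidean_space" where
  "basis_enum = (SOME b. bij_betw b {..<DIM('a)} Basis)"

lemma bij_betw_basis_enum: "bij_betw (basis_enum :: nat \<Rightarrow> 'a::euclidean_space) {..<DIM('a)} Basis"
  unfolding basis_enum_def
  by (rule someI_ex[of "\<lambda>b. bij_betw b {..<DIM('a)} Basis"]) (rule finite_same_card_bij; simp)

lemma sum_basis_enum:
  "(\<Sum>i<DIM('a). f (basis_enum i)) = (\<Sum>b\<in>(Basis :: 'a::euclidean_space set). f b)"
  using sum.reindex_bij_betw[OF bij_betw_basis_enum] by blast

lemma inner_basis_enum:
  assumes "i < DIM('a)" "j < DIM('a)"
  shows "basis_enum i \<bullet> (basis_enum j :: 'a::euclidean_space) = (if i = j then 1 else 0)"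
proof -
  have "basis_enum i \<in> (Basis :: 'a set)" "basis_enum j \<in> (Basis :: 'a set)"
    using assms bij_betwE[OF bij_betw_basis_enum] by auto
  moreover have "basis_enum i = (basis_enum j :: 'a) \<longleftrightarrow> i = j"
    using assms bij_betw_imp_inj_on[OF bij_betw_basis_enum[where 'a='a]]
    by (auto simp: inj_on_eq_iff)
  ultimately show ?thesis
    by (simp add: inner_Basis)
qed

definition coords :: "'a::euclidean_space \<Rightarrow> nat \<Rightarrow> real" where
  "coords x i = (if i < DIM('a) then x \<bullet> basis_enum i else 0)"

lemma coords_eq_zero [simp]: "DIM('a) \<le> i \<Longrightarrow> coords (x :: 'a::euclidean_space) i = 0"
  by (simp add: coords_def)

lemma inj_coords: "inj (coords :: 'a::euclidean_space \<Rightarrow> _)"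
proof (rule injI)
  fix x y :: 'a
  assume "coords x = coords y"
  then have xy: "x \<bullet> basis_enum i = y \<bullet> basis_enum i" if "i < DIM('a)" for i
    using that by (metis coords_def)
  show "x = y"
  proof (rule euclidean_eqI)
    fix b :: 'a
    assume "b \<in> Basis"
    then obtain i where "i < DIM('a)" "b = basis_enum i"
      using bij_betw_imp_surj_on[OF bij_betw_basis_enum[where 'a='a]] by (metis imageE lessThan_iff)
    then show "x \<bullet> b = y \<bullet> b"
      using xy by simp
  qed
qed

lemma range_coords: "range (coords :: 'a::euclidean_space \<Rightarrow> _) = {y. \<forall>i\<ge>DIM('a). y i = 0}"
proof (intro subset_antisym subsetI)
  fix y :: "nat \<Rightarrow> real"
  assume "y \<in> {y. \<forall>i\<ge>DIM('a). y i = 0}"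
  then have y: "\<And>i. DIM('a) \<le> i \<Longrightarrow> y i = 0"
    by simp
  define x :: 'a where "x = (\<Sum>j<DIM('a). y j *\<^sub>R basis_enum j)"
  have "coords x i = y i" for i
  proof (cases "i < DIM('a)")
    case True
    have "coords x i = (\<Sum>j<DIM('a). y j * (basis_enum j \<bullet> (basis_enum i :: 'a)))"
      using True by (simp add: coords_def x_def inner_sum_left)
    also have "\<dots> = (\<Sum>j<DIM('a). if j = i then y j else 0)"
      by (intro sum.cong refl) (simp add: inner_basis_enum True)
    also have "\<dots> = y i"
      using True by simp
    finally show ?thesis .
  qed (simp add: coords_def y)
  then show "y \<in> range (coords :: 'a \<Rightarrow> _)"
    by (metis ext rangeI)
qed auto

lemma norm_le_sum_coords: "norm (x :: 'a::euclidean_space) \<le> (\<Sum>i<DIM('a). \<bar>coords x i\<bar>)"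
  using norm_le_l1[of x] sum_basis_enum[of "\<lambda>b. \<bar>x \<bullet> b\<bar>"]
  by (simp add: coords_def)

lemma continuous_on_coords: "continuous_on UNIV (\<lambda>x :: 'a::euclidean_space. coords x i)"
  by (cases "i < DIM('a)") (simp_all add: coords_def continuous_intros)

lemma compactin_Euclidean_space_bounded:
  assumes "compactin (Euclidean_space n) K"
  obtains M where "0 \<le> M" "\<And>y i. y \<in> K \<Longrightarrow> \<bar>y i\<bar> \<le> M"
proof -
  have cont: "continuous_map (Euclidean_space n) euclideanreal (\<lambda>y. \<Sum>i<n. \<bar>y i\<bar>)"
  proof (intro continuous_intros)
    show "continuous_map (Euclidean_space n) euclideanreal (\<lambda>y. y i)" for i
      unfolding Euclidean_space_def
      by (intro continuous_map_from_subtopology continuous_map_product_projection) simp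
  qed simp
  have "bounded ((\<lambda>y. \<Sum>i<n. \<bar>y i\<bar>) ` K)"
    using image_compactin[OF assms cont] by (simp add: compact_imp_bounded)
  then obtain B where B: "\<And>y. y \<in> K \<Longrightarrow> (\<Sum>i<n. \<bar>y i\<bar>) \<le> B"
    unfolding bounded_iff by fastforce
  have "\<bar>y i\<bar> \<le> max 0 B" if "y \<in> K" for y i
  proof (cases "i < n")
    case True
    then have "\<bar>y i\<bar> \<le> (\<Sum>i<n. \<bar>y i\<bar>)"
      by (intro member_le_sum) auto
    then show ?thesis
      using B[OF that] by linarith
  next
    case False
    then show ?thesis
      using compactin_subset_topspace[OF assms] that by (auto simp: topspace_Euclidean_space)
  qed
  then show ?thesis
    using that by (meson max.cobounded1)
qed

section \<open>Associative absolute valued algebras\<close>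

locale assoc_absolute_valued_algebra =
  fixes mul :: "'a::euclidean_space \<Rightarrow> 'a \<Rightarrow> 'a" and ginv :: "'a \<Rightarrow> 'a" and e :: 'a
  assumes bounded_bilinear_mul: "bounded_bilinear mul"
    and mul_assoc: "mul (mul a b) c = mul a (mul b c)"
    and mul_e_left [simp]: "mul e a = a"
    and mul_e_right [simp]: "mul a e = a"
    and norm_e [simp]: "norm e = 1"
    and norm_mul: "norm (mul a b) = norm a * norm b"
    and mul_ginv_right: "norm g = 1 \<Longrightarrow> mul g (ginv g) = e"
    and mul_ginv_left: "norm g = 1 \<Longrightarrow> mul (ginv g) g = e"
begin

lemma mul_scaleR_left [simp]: "mul (c *\<^sub>R a) b = c *\<^sub>R mul a b"
  using bounded_bilinear_mul by (rule bounded_bilinear.scaleR_left)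

lemma mul_scaleR_right [simp]: "mul a (c *\<^sub>R b) = c *\<^sub>R mul a b"
  using bounded_bilinear_mul by (rule bounded_bilinear.scaleR_right)

lemma mul_zero_left [simp]: "mul 0 a = 0"
  using bounded_bilinear_mul by (rule bounded_bilinear.zero_left)

lemma norm_ginv [simp]: "norm g = 1 \<Longrightarrow> norm (ginv g) = 1"
  using norm_mul[of "ginv g" g] by (simp add: mul_ginv_left)

lemma ginv_e [simp]: "ginv e = e"
  using mul_ginv_right[of e] by simp

lemma mul_ginv_cancel_left [simp]: "norm g = 1 \<Longrightarrow> mul (ginv g) (mul g a) = a"
  by (simp flip: mul_assoc add: mul_ginv_left)

lemma ginv_mul:
  assumes "norm g = 1" "norm h = 1"
  shows "ginv (mul g h) = mul (ginv h) (ginv g)"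
proof -
  have gh: "norm (mul g h) = 1"
    using assms by (simp add: norm_mul)
  have "ginv (mul g h) = mul (ginv h) (mul (ginv g) (mul (mul g h) (ginv (mul g h))))"
    using assms by (simp add: mul_assoc)
  also have "\<dots> = mul (ginv h) (ginv g)"
    using gh by (simp add: mul_ginv_right)
  finally show ?thesis .
qed

definition phase :: "'a \<Rightarrow> 'a" where
  "phase a = (if a = 0 then e else sgn a)"

lemma norm_phase [simp]: "norm (phase a) = 1"
  by (simp add: phase_def norm_sgn)

lemma scaleR_norm_phase [simp]: "norm a *\<^sub>R phase a = a"
  by (simp add: phase_def sgn_div_norm)

lemma mul_ginv_phase_right: "mul a (ginv (phase a)) = norm a *\<^sub>R e"
  by (metis mul_ginv_right mul_scaleR_left norm_phase scaleR_norm_phase)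

lemma mul_ginv_phase_left: "mul (ginv (phase a)) a = norm a *\<^sub>R e"
  by (metis mul_ginv_left mul_scaleR_right norm_phase scaleR_norm_phase)

end

lemma assoc_absolute_valued_algebra_div_algebra:
  "assoc_absolute_valued_algebra
     ((*) :: 'a::{real_normed_div_algebra, euclidean_space} \<Rightarrow> 'a \<Rightarrow> 'a) inverse 1"
proof (rule assoc_absolute_valued_algebra.intro)
  fix g :: 'a
  assume "norm g = 1"
  then have "g \<noteq> 0"
    by auto
  then show "g * inverse g = 1" "inverse g * g = 1"
    by simp_all
qed (simp_all add: bounded_bilinear_mult mult.assoc norm_mult)

lemma qmult_simps:
  "qmult (a1, b1, c1, d1) (a2, b2, c2, d2) =
     (a1*a2 - b1*b2 - c1*c2 - d1*d2,
      a1*b2 + b1*a2 + c1*d2 - d1*c2,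
      a1*c2 - b1*d2 + c1*a2 + d1*b2,
      a1*d2 + b1*c2 - c1*b2 + d1*a2)"
  by (simp add: qmult_def)

lemma norm_quat: "norm ((a, b, c, d) :: quat) = sqrt (a\<^sup>2 + b\<^sup>2 + c\<^sup>2 + d\<^sup>2)"
  by (simp add: norm_Pair add.assoc)

lemma norm_qmult: "norm (qmult p q) = norm p * norm q"
proof -
  obtain a1 b1 c1 d1 a2 b2 c2 d2 where pq: "p = (a1, b1, c1, d1)" "q = (a2, b2, c2, d2)"
    by (cases p, cases q) auto
  have "(a1*a2 - b1*b2 - c1*c2 - d1*d2)\<^sup>2 + (a1*b2 + b1*a2 + c1*d2 - d1*c2)\<^sup>2 +
        (a1*c2 - b1*d2 + c1*a2 + d1*b2)\<^sup>2 + (a1*d2 + b1*c2 - c1*b2 + d1*a2)\<^sup>2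
      = (a1\<^sup>2 + b1\<^sup>2 + c1\<^sup>2 + d1\<^sup>2) * (a2\<^sup>2 + b2\<^sup>2 + c2\<^sup>2 + d2\<^sup>2)"
    \<comment> \<open>Euler's four-square identity\<close>
    by algebra
  then show ?thesis
    unfolding pq qmult_simps norm_quat by (simp add: real_sqrt_mult)
qed

lemma qinv_unit:
  assumes "a\<^sup>2 + b\<^sup>2 + c\<^sup>2 + d\<^sup>2 = 1"
  shows "qinv (a, b, c, d) = (a, - b, - c, - d)"
  using assms by (simp add: qinv_def)

lemma assoc_absolute_valued_algebra_quat: "assoc_absolute_valued_algebra qmult qinv (1, 0, 0, 0)"
proof (rule assoc_absolute_valued_algebra.intro)
  show "bounded_bilinear qmult"
  proof
    fix a a' b b' :: quat and r :: real
    show "qmult (a + a') b = qmult a b + qmult a' b"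
      by (cases a; cases a'; cases b) (simp add: qmult_simps algebra_simps)
    show "qmult a (b + b') = qmult a b + qmult a b'"
      by (cases a; cases b; cases b') (simp add: qmult_simps algebra_simps)
    show "qmult (r *\<^sub>R a) b = r *\<^sub>R qmult a b" "qmult a (r *\<^sub>R b) = r *\<^sub>R qmult a b"
      by (cases a; cases b; simp add: qmult_simps algebra_simps)+
  next
    show "\<exists>K. \<forall>a b. norm (qmult a b) \<le> norm a * norm b * K"
      by (rule exI[of _ 1]) (simp add: norm_qmult)
  qed
  fix a b c g :: quat
  show "qmult (qmult a b) c = qmult a (qmult b c)"
    by (cases a; cases b; cases c) (simp add: qmult_simps algebra_simps)
  show "qmult (1, 0, 0, 0) a = a" "qmult a (1, 0, 0, 0) = a"
    by (cases a; simp add: qmult_simps)+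
  show "norm ((1, 0, 0, 0) :: quat) = 1" "norm (qmult a b) = norm a * norm b"
    by (simp_all add: norm_quat norm_qmult)
  assume "norm g = 1"
  then obtain p q r s where g: "g = (p, q, r, s)" "p\<^sup>2 + q\<^sup>2 + r\<^sup>2 + s\<^sup>2 = 1"
    by (cases g) (simp add: norm_quat)
  then show "qmult g (qinv g) = (1, 0, 0, 0)" "qmult (qinv g) g = (1, 0, 0, 0)"
    by (simp_all add: qinv_unit qmult_simps algebra_simps power2_eq_square)
qed

section \<open>The chain action and its orbit invariants\<close>

lemma topspace_Kspace: "topspace (Kspace k) = {x. \<forall>i\<ge>k. x i = 0}"
  by (simp add: Kspace_def)

lemma Kspace_eq_top_of_set: "Kspace k = top_of_set {x. \<forall>i\<ge>k. x i = 0}"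
  by (simp add: Kspace_def euclidean_product_topology)

locale chain_action_setting = assoc_absolute_valued_algebra +
  fixes k :: nat
  assumes k_pos: "0 < k"
begin

abbreviation act :: "(nat \<Rightarrow> 'a) \<Rightarrow> (nat \<Rightarrow> 'a) \<Rightarrow> nat \<Rightarrow> 'a" where
  "act \<equiv> chain_action mul ginv k"

definition sphere_valued :: "(nat \<Rightarrow> 'a) \<Rightarrow> bool" where
  "sphere_valued g \<longleftrightarrow> (\<forall>i < k - 1. norm (g i) = 1)"

text \<open>In the paper's notation gauge g i is g_i, with the convention g_0 = g_k = 1.\<close>

definition gauge :: "(nat \<Rightarrow> 'a) \<Rightarrow> nat \<Rightarrow> 'a" where
  "gauge g i = (if 0 < i \<and> i < k then g (i - 1) else e)"

lemma chain_action_eq: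
  "i < k \<Longrightarrow> act g q i = mul (mul (gauge g i) (q i)) (ginv (gauge g (Suc i)))"
  by (auto simp: chain_action_def gauge_def Let_def)

lemma chain_action_beyond: "k \<le> i \<Longrightarrow> act g q i = q i"
  by (simp add: chain_action_def)

lemma norm_gauge [simp]: "sphere_valued g \<Longrightarrow> norm (gauge g i) = 1"
  by (auto simp: sphere_valued_def gauge_def)

lemma sphere_valued_mul:
  "sphere_valued g \<Longrightarrow> sphere_valued h \<Longrightarrow> sphere_valued (\<lambda>i. mul (h i) (g i))"
  by (simp add: sphere_valued_def norm_mul)

lemma sphere_valued_ginv: "sphere_valued g \<Longrightarrow> sphere_valued (\<lambda>i. ginv (g i))"
  by (simp add: sphere_valued_def)

lemma chain_action_chain_action:
  assumes "sphere_valued g" "sphere_valued h"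
  shows "act h (act g q) = act (\<lambda>i. mul (h i) (g i)) q"
proof
  fix i
  have "gauge (\<lambda>i. mul (h i) (g i)) i = mul (gauge h i) (gauge g i)" for i
    by (simp add: gauge_def)
  then show "act h (act g q) i = act (\<lambda>i. mul (h i) (g i)) q i"
    using assms
    by (cases "i < k") (simp_all add: chain_action_eq chain_action_beyond ginv_mul mul_assoc)
qed

lemma chain_action_e: "act (\<lambda>_. e) q = q"
proof
  fix i
  show "act (\<lambda>_. e) q i = q i"
    by (cases "i < k") (simp_all add: chain_action_eq chain_action_beyond gauge_def)
qed

lemma chain_action_ginv_chain_action:
  assumes "sphere_valued g"
  shows "act (\<lambda>i. ginv (g i)) (act g q) = q"
proof -
  have "act (\<lambda>i. mul (ginv (g i)) (g i)) q = act (\<lambda>_. e) q"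
    using assms unfolding chain_action_def sphere_valued_def
    by (intro ext) (auto simp: mul_ginv_left Let_def)
  then show ?thesis
    using assms by (simp add: chain_action_chain_action sphere_valued_ginv chain_action_e)
qed

lemma norm_chain_action: "sphere_valued g \<Longrightarrow> norm (act g q i) = norm (q i)"
  by (cases "i < k") (simp_all add: chain_action_eq chain_action_beyond norm_mul)

lemma chain_action_in_Kspace:
  "q \<in> topspace (Kspace k) \<Longrightarrow> act g q \<in> topspace (Kspace k)"
  by (simp add: topspace_Kspace chain_action_beyond)

definition in_orbit :: "(nat \<Rightarrow> 'a) \<Rightarrow> (nat \<Rightarrow> 'a) \<Rightarrow> bool" where
  "in_orbit p q \<longleftrightarrow> (\<exists>g. sphere_valued g \<and> q = act g p)"

lemma in_orbit_sym: "in_orbit p q \<Longrightarrow> in_orbit q p"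
  unfolding in_orbit_def using chain_action_ginv_chain_action sphere_valued_ginv by metis

lemma in_orbit_trans: "in_orbit p q \<Longrightarrow> in_orbit q r \<Longrightarrow> in_orbit p r"
  unfolding in_orbit_def using chain_action_chain_action sphere_valued_mul by metis

lemma in_orbit_in_Kspace: "in_orbit p q \<Longrightarrow> p \<in> topspace (Kspace k) \<Longrightarrow> q \<in> topspace (Kspace k)"
  by (auto simp: in_orbit_def chain_action_in_Kspace)

lemma orbit_rel_eq:
  "orbit_rel mul ginv {g. norm g = 1} k = {(p, q). p \<in> topspace (Kspace k) \<and> in_orbit p q}"
  by (auto simp: orbit_rel_def in_orbit_def sphere_valued_def)

primrec prefix_prod :: "nat \<Rightarrow> (nat \<Rightarrow> 'a) \<Rightarrow> 'a" where
  "prefix_prod 0 q = e"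
| "prefix_prod (Suc m) q = mul (prefix_prod m q) (q m)"

lemma norm_prefix_prod: "norm (prefix_prod m q) = (\<Prod>i<m. norm (q i))"
  by (induction m) (simp_all add: norm_mul)

lemma continuous_on_prefix_prod: "continuous_on UNIV (prefix_prod m)"
proof (induction m)
  case (Suc m)
  then show ?case
    unfolding prefix_prod.simps
    by (rule bounded_bilinear.continuous_on[OF bounded_bilinear_mul]) simp
qed simp

lemma prefix_prod_chain_action:
  assumes "sphere_valued g" "m \<le> k"
  shows "prefix_prod m (act g q) = mul (prefix_prod m q) (ginv (gauge g m))"
  using assms(2)
proof (induction m)
  case 0
  then show ?case
    by (simp add: gauge_def)
next
  case (Suc m)
  then have "prefix_prod (Suc m) (act g q)
      = mul (mul (prefix_prod m q) (ginv (gauge g m)))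
            (mul (mul (gauge g m) (q m)) (ginv (gauge g (Suc m))))"
    by (simp add: chain_action_eq)
  also have "\<dots> = mul (prefix_prod (Suc m) q) (ginv (gauge g (Suc m)))"
    using assms(1) by (simp add: mul_assoc)
  finally show ?case .
qed

lemma prefix_prod_in_orbit: "in_orbit p q \<Longrightarrow> prefix_prod k q = prefix_prod k p"
  using prefix_prod_chain_action[of _ k p] by (auto simp: in_orbit_def gauge_def)

lemma norm_in_orbit: "in_orbit p q \<Longrightarrow> norm (q i) = norm (p i)"
  by (auto simp: in_orbit_def norm_chain_action)

definition standard_form :: "(nat \<Rightarrow> real) \<Rightarrow> 'a \<Rightarrow> nat \<Rightarrow> 'a" where
  "standard_form r x i = (if i < k - 1 then r i *\<^sub>R e else if i = k - 1 then x else 0)"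

lemma standard_form_in_Kspace: "standard_form r x \<in> topspace (Kspace k)"
  using k_pos by (auto simp: topspace_Kspace standard_form_def)

lemma prefix_prod_standard_form: "prefix_prod k (standard_form r x) = (\<Prod>i<k - 1. r i) *\<^sub>R x"
proof -
  have "prefix_prod m (standard_form r x) = (\<Prod>i<m. r i) *\<^sub>R e" if "m \<le> k - 1" for m
    using that by (induction m) (simp_all add: standard_form_def mult.commute)
  then have "prefix_prod (Suc (k - 1)) (standard_form r x) = (\<Prod>i<k - 1. r i) *\<^sub>R x"
    by (simp add: standard_form_def)
  moreover have "Suc (k - 1) = k"
    using k_pos by simp
  ultimately show ?thesis
    by simp
qed

primrec phase_chain :: "(nat \<Rightarrow> 'a) \<Rightarrow> nat \<Rightarrow> 'a" where
  "phase_chain q 0 = e"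
| "phase_chain q (Suc i) = phase (mul (phase_chain q i) (q i))"

lemma norm_phase_chain [simp]: "norm (phase_chain q i) = 1"
  by (cases i) simp_all

text \<open>Choosing g_(i+1) as the phase of g_i q_i turns g_i q_i g_(i+1)^(-1) into norm q_i.\<close>

lemma in_orbit_standard_form:
  assumes "q \<in> topspace (Kspace k)"
  obtains x where "norm x = norm (q (k - 1))" "in_orbit q (standard_form (\<lambda>i. norm (q i)) x)"
proof -
  define g where "g j = phase_chain q (Suc j)" for j
  have g: "sphere_valued g"
    by (simp add: sphere_valued_def g_def)
  have gauge_g: "gauge g i = (if i < k then phase_chain q i else e)" for i
    by (cases i) (simp_all add: gauge_def g_def)
  define x where "x = mul (phase_chain q (k - 1)) (q (k - 1))"
  have "act g q i = standard_form (\<lambda>i. norm (q i)) x i" for i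
  proof -
    consider "i < k - 1" | "i = k - 1" | "k \<le> i"
      by linarith
    then show ?thesis
    proof cases
      case 1
      then have "i < k" "Suc i < k"
        by linarith+
      with 1 show ?thesis
        by (simp add: chain_action_eq gauge_g standard_form_def mul_ginv_phase_right norm_mul)
    next
      case 2
      then show ?thesis
        using k_pos by (simp add: chain_action_eq gauge_g standard_form_def x_def)
    next
      case 3
      then have "\<not> i < k - 1" "i \<noteq> k - 1"
        using k_pos by linarith+
      with 3 show ?thesis
        using assms by (simp add: chain_action_beyond standard_form_def topspace_Kspace)
    qed
  qed
  then have "in_orbit q (standard_form (\<lambda>i. norm (q i)) x)"
    using g unfolding in_orbit_def by (metis ext)
  moreover have "norm x = norm (q (k - 1))"
    by (simp add: x_def norm_mul)
  ultimately show ?thesis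
    using that by blast
qed

text \<open>If some entry q_j with j < k - 1 vanishes, the gauge may jump there, which frees the phase
  of the last entry.\<close>

lemma in_orbit_standard_form_rotate:
  assumes "j < k - 1" "r j = 0"
  shows "in_orbit (standard_form r x) (standard_form r (norm x *\<^sub>R e))"
proof -
  define h where "h = ginv (phase x)"
  define g where "g m = (if j \<le> m then h else e)" for m
  have h: "norm h = 1"
    by (simp add: h_def)
  have g: "sphere_valued g"
    by (simp add: sphere_valued_def g_def h)
  have gauge_g: "gauge g i = (if j < i \<and> i < k then h else e)" for i
    by (auto simp: gauge_def g_def)
  have "act g (standard_form r x) i = standard_form r (norm x *\<^sub>R e) i" for i
  proof -
    consider "i < j" | "i = j" | "j < i" "i < k - 1" | "i = k - 1" | "k \<le> i"
      by linarith
    then show ?thesis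
    proof cases
      case 1
      then show ?thesis
        using assms by (simp add: chain_action_eq gauge_g standard_form_def)
    next
      case 2
      then show ?thesis
        using assms by (simp add: chain_action_eq gauge_g standard_form_def)
    next
      case 3
      then have "i < k" "Suc i < k"
        by linarith+
      with 3 h show ?thesis
        by (simp add: chain_action_eq gauge_g standard_form_def mul_ginv_right)
    next
      case 4
      then show ?thesis
        using assms
        by (simp add: chain_action_eq gauge_g standard_form_def h_def mul_ginv_phase_left)
    next
      case 5
      then have "\<not> i < k - 1" "i \<noteq> k - 1"
        using k_pos by linarith+
      with 5 show ?thesis
        by (simp add: chain_action_beyond standard_form_def)
    qed
  qed
  then show ?thesis
    using g unfolding in_orbit_def by (metis ext)
qed

lemma in_orbit_if_same_norms_prefix_prod:
  assumes p: "p \<in> topspace (Kspace k)" and q: "q \<in> topspace (Kspace k)"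
    and norms: "\<And>i. norm (p i) = norm (q i)"
    and prod: "prefix_prod k p = prefix_prod k q"
  shows "in_orbit p q"
proof -
  define r where "r i = norm (p i)" for i
  obtain x where x: "norm x = r (k - 1)" "in_orbit p (standard_form r x)"
    using in_orbit_standard_form[OF p] unfolding r_def .
  obtain y where y: "norm y = r (k - 1)" "in_orbit q (standard_form r y)"
    using in_orbit_standard_form[OF q] unfolding r_def norms .
  have "(\<Prod>i<k - 1. r i) *\<^sub>R x = (\<Prod>i<k - 1. r i) *\<^sub>R y"
    using prod prefix_prod_in_orbit[OF x(2)] prefix_prod_in_orbit[OF y(2)]
    by (simp add: prefix_prod_standard_form)
  show ?thesis
  proof (cases "(\<Prod>i<k - 1. r i) = 0")
    case False
    then have "x = y"
      using \<open>_ *\<^sub>R x = _ *\<^sub>R y\<close> by simp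
    then show ?thesis
      using x y in_orbit_sym in_orbit_trans by blast
  next
    case True
    then obtain j where "j < k - 1" "r j = 0"
      by (auto simp: prod_zero_iff)
    then have "in_orbit (standard_form r x) (standard_form r (r (k - 1) *\<^sub>R e))"
      "in_orbit (standard_form r y) (standard_form r (r (k - 1) *\<^sub>R e))"
      using in_orbit_standard_form_rotate x(1) y(1) by metis+
    then show ?thesis
      using x y in_orbit_sym in_orbit_trans by meson
  qed
qed

definition orbit_invariants :: "(nat \<Rightarrow> 'a) \<Rightarrow> nat \<Rightarrow> real" where
  "orbit_invariants q i =
     (if i < k - 1 then norm (q i) - norm (q (k - 1)) else coords (prefix_prod k q) (i - (k - 1)))"

lemma orbit_invariants_eq_zero:
  assumes "DIM('a) + k - 1 \<le> i"
  shows "orbit_invariants q i = 0"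
proof -
  have "\<not> i < k - 1" "DIM('a) \<le> i - (k - 1)"
    using assms k_pos by linarith+
  then show ?thesis
    by (simp add: orbit_invariants_def)
qed

lemma orbit_invariants_in_orbit: "in_orbit p q \<Longrightarrow> orbit_invariants q = orbit_invariants p"
  by (simp add: orbit_invariants_def norm_in_orbit prefix_prod_in_orbit fun_eq_iff)

lemma in_orbit_if_orbit_invariants_eq:
  assumes p: "p \<in> topspace (Kspace k)" and q: "q \<in> topspace (Kspace k)"
    and eq: "orbit_invariants p = orbit_invariants q"
  shows "in_orbit p q"
proof (rule in_orbit_if_same_norms_prefix_prod[OF p q])
  have "coords (prefix_prod k p) j = coords (prefix_prod k q) j" for j
    using fun_cong[OF eq, of "k - 1 + j"] by (simp add: orbit_invariants_def)
  then show prod: "prefix_prod k p = prefix_prod k q"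
    using inj_coords by (metis ext injD)
  define s where "s j = norm (p j) - norm (p (k - 1))" for j
  have s: "s j = norm (q j) - norm (q (k - 1))" if "j < k - 1" for j
    using that fun_cong[OF eq, of j] by (simp add: s_def orbit_invariants_def)
  have "(\<Prod>j<k - 1. norm (q (k - 1)) + s j)
      = (\<Prod>j<k - 1. norm (q (k - 1)) + (norm (q j) - norm (q (k - 1))))"
    by (intro prod.cong) (simp_all add: s)
  then have "norm (p (k - 1)) * (\<Prod>j<k - 1. norm (p (k - 1)) + s j)
      = norm (q (k - 1)) * (\<Prod>j<k - 1. norm (q (k - 1)) + s j)"
    using arg_cong[OF prod, of norm]
    by (simp add: norm_prefix_prod prod_lessThan_eq_shifted_prod[OF k_pos, of "\<lambda>i. norm (p i)"]
        prod_lessThan_eq_shifted_prod[OF k_pos, of "\<lambda>i. norm (q i)"] s_def)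
  moreover have "\<forall>j<k - 1. 0 \<le> norm (p (k - 1)) + s j"
    by (simp add: s_def)
  moreover have "\<forall>j<k - 1. 0 \<le> norm (q (k - 1)) + s j"
    by (simp add: s)
  ultimately have last: "norm (p (k - 1)) = norm (q (k - 1))"
    using shifted_prod_inj[of "norm (p (k - 1))" "k - 1" s "norm (q (k - 1))"] by simp
  show "norm (p i) = norm (q i)" for i
  proof -
    consider "i < k - 1" | "i = k - 1" | "k \<le> i"
      by linarith
    then show ?thesis
      using last s[of i] p q by cases (auto simp: s_def topspace_Kspace)
  qed
qed

lemma continuous_map_orbit_invariants:
  "continuous_map (Kspace k) (Euclidean_space (DIM('a) + k - 1)) orbit_invariants"
proof -
  have "continuous_on UNIV (\<lambda>q. orbit_invariants q i)" for i
    unfolding orbit_invariants_def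
    by (cases "i < k - 1")
      (simp_all add: continuous_intros
        continuous_on_compose2[OF continuous_on_coords continuous_on_prefix_prod])
  then have "continuous_map (Kspace k) euclideanreal (\<lambda>q. orbit_invariants q i)" for i
    unfolding Kspace_eq_top_of_set continuous_map_iff_continuous by (rule continuous_on_subset) auto
  then have "continuous_map (Kspace k) (Euclidean_space (DIM('a) + k - 1))
      (\<lambda>q i. if i < DIM('a) + k - 1 then orbit_invariants q i else 0)"
    by (simp add: continuous_map_componentwise_Euclidean_space)
  moreover have "(\<lambda>q i. if i < DIM('a) + k - 1 then orbit_invariants q i else 0) = orbit_invariants"
    using orbit_invariants_eq_zero by (auto simp: fun_eq_iff)
  ultimately show ?thesis
    by simp
qed

lemma orbit_invariants_image:
  "orbit_invariants ` topspace (Kspace k) = topspace (Euclidean_space (DIM('a) + k - 1))"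
proof (intro subset_antisym subsetI)
  fix y
  assume "y \<in> orbit_invariants ` topspace (Kspace k)"
  then show "y \<in> topspace (Euclidean_space (DIM('a) + k - 1))"
    using orbit_invariants_eq_zero by (auto simp: topspace_Euclidean_space)
next
  fix y
  assume "y \<in> topspace (Euclidean_space (DIM('a) + k - 1))"
  then have y: "\<And>i. DIM('a) + k - 1 \<le> i \<Longrightarrow> y i = 0"
    by (simp add: topspace_Euclidean_space)
  have "(\<lambda>j. y (k - 1 + j)) \<in> range (coords :: 'a \<Rightarrow> _)"
    unfolding range_coords using k_pos by (auto intro!: y)
  then obtain z :: 'a where z: "coords z = (\<lambda>j. y (k - 1 + j))"
    by (metis rangeE)
  obtain a where a: "0 \<le> a" "\<forall>j<k - 1. 0 \<le> a + y j" "a * (\<Prod>j<k - 1. a + y j) = norm z"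
    using shifted_prod_surj[of "norm z" "k - 1" y] by auto
  define r where "r i = a + y i" for i
  define q where "q = standard_form r (a *\<^sub>R phase z)"
  have "prefix_prod k q = ((\<Prod>i<k - 1. r i) * a) *\<^sub>R phase z"
    by (simp add: q_def prefix_prod_standard_form)
  also have "\<dots> = z"
    using a(3) by (simp add: r_def mult.commute)
  finally have "prefix_prod k q = z" .
  then have "orbit_invariants q = y"
    using a k_pos z by (auto simp: fun_eq_iff orbit_invariants_def q_def standard_form_def r_def)
  then show "y \<in> orbit_invariants ` topspace (Kspace k)"
    using standard_form_in_Kspace q_def by blast
qed

lemma norm_le_if_orbit_invariants_bounded:
  assumes q: "q \<in> topspace (Kspace k)"
    and bound: "\<And>i. \<bar>orbit_invariants q i\<bar> \<le> M" and "0 \<le> M"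
  shows "norm (q i) \<le> 2 * (real DIM('a) * M) + 1"
proof -
  define M' where "M' = DIM('a) * M"
  have "M \<le> M'"
    using mult_right_mono[of 1 "real DIM('a)" M] \<open>0 \<le> M\<close> by (simp add: M'_def)
  have "norm (prefix_prod k q) \<le> (\<Sum>j<DIM('a). \<bar>coords (prefix_prod k q) j\<bar>)"
    by (rule norm_le_sum_coords)
  also have "\<dots> \<le> (\<Sum>j<DIM('a). M)"
    using bound by (intro sum_mono) (metis orbit_invariants_def add_diff_cancel_left' not_add_less1)
  finally have "norm (prefix_prod k q) \<le> M'"
    by (simp add: M'_def)
  define a where "a = norm (q (k - 1))"
  define s where "s j = norm (q j) - a" for j
  have s: "\<forall>j<k - 1. \<bar>s j\<bar> \<le> M'"
  proof (intro allI impI)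
    fix j
    assume "j < k - 1"
    then have "\<bar>s j\<bar> \<le> M"
      using bound[of j] by (simp add: s_def a_def orbit_invariants_def)
    then show "\<bar>s j\<bar> \<le> M'"
      using \<open>M \<le> M'\<close> by linarith
  qed
  have "a * (\<Prod>j<k - 1. a + s j) \<le> M'"
    using \<open>norm (prefix_prod k q) \<le> M'\<close>
    by (simp add: norm_prefix_prod a_def s_def
        prod_lessThan_eq_shifted_prod[OF k_pos, of "\<lambda>i. norm (q i)"])
  then have "a \<le> M' + 1"
    using shifted_prod_bound[of M' "k - 1" s a] s \<open>M \<le> M'\<close> \<open>0 \<le> M\<close> by simp
  moreover have "norm (q i) \<le> a + M'"
  proof -
    consider "i < k - 1" | "i = k - 1" | "k \<le> i"
      by linarith
    then show ?thesis
      using s[rule_format, of i] q \<open>0 \<le> M\<close> \<open>M \<le> M'\<close>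
      by cases (auto simp: s_def a_def topspace_Kspace)
  qed
  ultimately show ?thesis
    by (simp add: M'_def)
qed

lemma compactin_orbit_invariants_preimage:
  assumes K: "compactin (Euclidean_space (DIM('a) + k - 1)) K"
  shows "compactin (Kspace k) {q \<in> topspace (Kspace k). orbit_invariants q \<in> K}"
proof -
  obtain M where M: "0 \<le> M" "\<And>y i. y \<in> K \<Longrightarrow> \<bar>y i\<bar> \<le> M"
    using compactin_Euclidean_space_bounded[OF K] by blast
  define B where
    "B = PiE UNIV (\<lambda>i. if i < k then cball (0 :: 'a) (2 * (real DIM('a) * M) + 1) else {0})"
  have "compactin (product_topology (\<lambda>i. euclidean) UNIV) B"
    unfolding B_def compactin_PiE by auto
  moreover have "B \<subseteq> {x. \<forall>i\<ge>k. x i = 0}"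
    by (auto simp: B_def PiE_iff) (metis not_less singletonD)
  ultimately have "compactin (Kspace k) B"
    by (simp add: Kspace_def compactin_subtopology)
  moreover have "{q \<in> topspace (Kspace k). orbit_invariants q \<in> K} \<subseteq> B"
    using norm_le_if_orbit_invariants_bounded M by (auto simp: B_def PiE_iff topspace_Kspace)
  moreover have "closedin (Kspace k) {q \<in> topspace (Kspace k). orbit_invariants q \<in> K}"
    using closedin_continuous_map_preimage[OF continuous_map_orbit_invariants
        compactin_imp_closedin[OF Hausdorff_Euclidean_space K]] .
  ultimately show ?thesis
    by (rule closed_compactin)
qed

lemma quotient_map_orbit_invariants:
  "quotient_map (Kspace k) (Euclidean_space (DIM('a) + k - 1)) orbit_invariants"
proof (rule perfect_imp_quotient_map[OF compact_imp_perfect_map])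
  show "k_space (Euclidean_space (DIM('a) + k - 1))"
    by (rule metrizable_imp_k_space[OF metrizable_Euclidean_space])
  show "kc_space (Euclidean_space (DIM('a) + k - 1))"
    by (rule Hausdorff_imp_kc_space[OF Hausdorff_Euclidean_space])
  show "orbit_invariants ` topspace (Kspace k) = topspace (Euclidean_space (DIM('a) + k - 1))"
    by (rule orbit_invariants_image)
  show "continuous_map (Kspace k) (Euclidean_space (DIM('a) + k - 1)) orbit_invariants"
    by (rule continuous_map_orbit_invariants)
qed (rule compactin_orbit_invariants_preimage)

theorem orbit_space_homeomorphic_Euclidean_space:
  "orbit_space mul ginv {g. norm g = 1} k homeomorphic_space Euclidean_space (DIM('a) + k - 1)"
proof -
  have "orbit_rel mul ginv {g. norm g = 1} k = {(p, q). p \<in> topspace (Kspace k) \<and>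
      q \<in> topspace (Kspace k) \<and> orbit_invariants p = orbit_invariants q}"
    unfolding orbit_rel_eq
    by (auto intro: in_orbit_if_orbit_invariants_eq in_orbit_in_Kspace
        dest: orbit_invariants_in_orbit[symmetric])
  then show ?thesis
    unfolding orbit_space_def
    using homeomorphic_space_quotient_topology[OF quotient_map_orbit_invariants] by simp
qed

end

lemma chain_action_setting_div_algebra:
  "0 < k \<Longrightarrow> chain_action_setting
     ((*) :: 'a::{real_normed_div_algebra, euclidean_space} \<Rightarrow> 'a \<Rightarrow> 'a) inverse 1 k"
  by (intro chain_action_setting.intro assoc_absolute_valued_algebra_div_algebra
      chain_action_setting_axioms.intro)

lemma chain_action_setting_quat: "0 < k \<Longrightarrow> chain_action_setting qmult qinv (1, 0, 0, 0) k"
  by (intro chain_action_setting.intro assoc_absolute_valued_algebra_quat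
      chain_action_setting_axioms.intro)

theorem proposition3p5:
  fixes k :: nat
  assumes "k \<ge> 2"
  shows "orbit_space ((*) :: real \<Rightarrow> real \<Rightarrow> real) inverse {g. norm g = 1} k
           homeomorphic_space Euclidean_space (1 + k - 1)
       \<and> orbit_space ((*) :: complex \<Rightarrow> complex \<Rightarrow> complex) inverse {g. norm g = 1} k
           homeomorphic_space Euclidean_space (2 + k - 1)
       \<and> orbit_space qmult qinv {g :: quat. norm g = 1} k
           homeomorphic_space Euclidean_space (4 + k - 1)"
proof -
  have k: "0 < k"
    using assms by simp
  have "orbit_space ((*) :: real \<Rightarrow> _) inverse {g. norm g = 1} k
      homeomorphic_space Euclidean_space (DIM(real) + k - 1)"
    "orbit_space ((*) :: complex \<Rightarrow> _) inverse {g. norm g = 1} k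
      homeomorphic_space Euclidean_space (DIM(complex) + k - 1)"
    by (rule chain_action_setting.orbit_space_homeomorphic_Euclidean_space,
        rule chain_action_setting_div_algebra[OF k])+
  moreover have "orbit_space qmult qinv {g :: quat. norm g = 1} k
      homeomorphic_space Euclidean_space (DIM(quat) + k - 1)"
    by (rule chain_action_setting.orbit_space_homeomorphic_Euclidean_space[OF
          chain_action_setting_quat[OF k]])
  ultimately show ?thesis
    by (simp add: eval_nat_numeral)
qed

end
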